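(* Let $R$ be an integral domain of characteristic $0$ and let $Z$ be a $\Leftrightarrow_R$-connected set of roots of unity in $R$. Then for any nonempty subset $Z'\subset Z$ the homomorphism $\rho^R_{Z,Z'}\colon R[q]^Z\to R[q]^{Z'}$ is injective.
   Context: All rings are commutative with unit; $q$ is an indeterminate. For a set $M$ of monic polynomials in $R[q]$, let $M^*$ be the multiplicative set it generates, directed by divisibility, and $R[q]^M=\varprojlim_{f\in M^*}R[q]/(f)$. For a set $Z$ of roots of unity in $R$, $R[q]^Z:=R[q]^{M_Z}$ where $M_Z=\{q-\zeta:\zeta\in Z\}$; for $Z'\subset Z$, $\rho^R_{Z,Z'}$ is induced by the identity of $R[q]$. For roots of unity $\zeta,\zeta'\in R$ write $\zeta\Leftrightarrow_R\zeta'$ if $R$ is $(\zeta-\zeta')$-adically separated, i.e. $\bigcap_{j\ge0}(\zeta-\zeta')^jR=(0)$ (equivalently, $\operatorname{ord}(\zeta^{-1}\zeta')$ is a power of a prime $p$ with $\bigcap_j p^jR=(0)$). A set $Z$ is $\Leftrightarrow_R$-connected if it is nonempty and any two elements are joined by a finite chain in $Z$ with consecutive elements related by $\Leftrightarrow_R$. *)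

theory Defs
  imports "HOL-Computational_Algebra.Polynomial" "HOL-Library.Multiset"
begin

definition mult_closure :: "'a::comm_ring_1 poly set \<Rightarrow> 'a poly set" where
  "mult_closure M = {prod_mset F | F. set_mset F \<subseteq> M}"

text \<open>An element of R[q]^M = lim_{f in M^*} R[q]/(f) is represented by a family x
  assigning to each f in M^* a representative x f of a residue class mod f,
  subject to compatibility along divisibility.\<close>
definition compatible_family :: "'a::comm_ring_1 poly set \<Rightarrow> ('a poly \<Rightarrow> 'a poly) \<Rightarrow> bool" where
  "compatible_family M x \<longleftrightarrow>
     (\<forall>f\<in>mult_closure M. \<forall>g\<in>mult_closure M. f dvd g \<longrightarrow> f dvd (x g - x f))"

definition limit_eq :: "'a::comm_ring_1 poly set \<Rightarrow> ('a poly \<Rightarrow> 'a poly) \<Rightarrow> ('a poly \<Rightarrow> 'a poly) \<Rightarrow> bool" where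
  "limit_eq M x y \<longleftrightarrow> (\<forall>f\<in>mult_closure M. f dvd (x f - y f))"

definition root_of_unity :: "'a::comm_ring_1 \<Rightarrow> bool" where
  "root_of_unity z \<longleftrightarrow> (\<exists>n>0. z ^ n = 1)"

definition M_of :: "'a::comm_ring_1 set \<Rightarrow> 'a poly set" where
  "M_of Z = {[:- z, 1:] | z. z \<in> Z}"

text \<open>zeta \<Leftrightarrow>_R zeta': R is (zeta - zeta')-adically separated.\<close>
definition adic_related :: "'a::comm_ring_1 \<Rightarrow> 'a \<Rightarrow> bool" where
  "adic_related z w \<longleftrightarrow> (\<forall>r. (\<forall>j::nat. (z - w) ^ j dvd r) \<longrightarrow> r = 0)"

definition adic_connected :: "'a::comm_ring_1 set \<Rightarrow> bool" where
  "adic_connected Z \<longleftrightarrow> Z \<noteq> {} \<and>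
     (\<forall>a\<in>Z. \<forall>b\<in>Z. (\<lambda>u v. u \<in> Z \<and> v \<in> Z \<and> adic_related u v)\<^sup>*\<^sup>* a b)"

text \<open>Injectivity of rho_{Z,Z'}: restriction of families from M_Z^* to M_{Z'}^*
  (induced by the identity of R[q]).\<close>
definition rho_injective :: "'a::comm_ring_1 set \<Rightarrow> 'a set \<Rightarrow> bool" where
  "rho_injective Z Z' \<longleftrightarrow>
     (\<forall>x y. compatible_family (M_of Z) x \<longrightarrow> compatible_family (M_of Z) y \<longrightarrow>
        limit_eq (M_of Z') x y \<longrightarrow> limit_eq (M_of Z) x y)"

end

theory Submission imports Defs begin

text \<open>The difference \<open>d\<close> of two compatible families is again compatible, and \<open>d\<close> lies in the
  kernel of \<open>\<rho>\<close> when \<open>f\<close> divides \<open>d f\<close> for all \<open>f \<in> M\<^sub>Z\<^sub>'\<^sup>*\<close>. Call \<open>d\<close> vanishing at \<open>z\<close> when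
  \<open>(q - z)\<^sup>n\<close> divides \<open>d ((q - z)\<^sup>n)\<close> for all \<open>n\<close>. Vanishing passes from \<open>u\<close> to \<open>v\<close> whenever
  \<open>u \<Leftrightarrow>\<^sub>R v\<close>, so by connectedness \<open>d\<close> vanishes at every point of \<open>Z\<close>. Finally, since \<open>R\<close> is a
  domain, a product of linear factors \<open>q - z\<close> divides a nonzero polynomial as soon as each
  prime-power part does (compare root orders), so \<open>f\<close> divides \<open>d f\<close> for all \<open>f \<in> M\<^sub>Z\<^sup>*\<close>.\<close>

lemma pcompose_power: "(p ^ n) \<circ>\<^sub>p r = (p \<circ>\<^sub>p r) ^ n"
  for p r :: "'a::comm_ring_1 poly"
  by (induction n) (simp_all add: pcompose_mult pcompose_1)

lemma pcompose_dvd_pcompose: "p dvd q \<Longrightarrow> p \<circ>\<^sub>p r dvd q \<circ>\<^sub>p r"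
  for p q r :: "'a::comm_ring_1 poly"
  by (elim dvdE) (simp add: pcompose_mult)

lemma linear_power_dvd_iff_coeff_shift:
  fixes p :: "'a::comm_ring_1 poly"
  shows "[:-v, 1:] ^ n dvd p \<longleftrightarrow> (\<forall>i<n. coeff (p \<circ>\<^sub>p [:v, 1:]) i = 0)"
proof -
  have monom: "monom 1 n = ([:0, 1:] :: 'a poly) ^ n" by (simp add: monom_altdef)
  have shift: "[:-v, 1:] ^ n \<circ>\<^sub>p [:v, 1:] = monom 1 n"
    by (simp add: monom pcompose_power pcompose_pCons)
  have unshift: "monom 1 n \<circ>\<^sub>p [:-v, 1:] = [:-v, 1:] ^ n"
    by (simp add: monom pcompose_power pcompose_pCons)
  have inverse: "(p \<circ>\<^sub>p [:v, 1:]) \<circ>\<^sub>p [:-v, 1:] = p"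
    by (simp flip: pcompose_assoc add: pcompose_pCons)
  have "[:-v, 1:] ^ n dvd p \<longleftrightarrow> monom 1 n dvd p \<circ>\<^sub>p [:v, 1:]"
    using pcompose_dvd_pcompose[of "[:-v, 1:] ^ n" p "[:v, 1:]"]
      pcompose_dvd_pcompose[of "monom 1 n" "p \<circ>\<^sub>p [:v, 1:]" "[:-v, 1:]"]
    by (auto simp: shift unshift inverse)
  then show ?thesis by (simp add: monom_1_dvd_iff')
qed

lemma power_dvd_coeff_linear_power_mult:
  fixes c :: "'a::comm_ring_1"
  assumes "i + j \<le> N"
  shows "c ^ j dvd coeff ([:c, 1:] ^ N * p) i"
proof -
  have "c ^ j dvd coeff ([:c, 1:] ^ N) k" if "k \<le> i" for k
  proof -
    have "coeff ([:c, 1:] ^ N) k = of_nat (N choose k) * c ^ (N - k)"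
      using that assms by (simp add: coeff_linear_poly_power)
    moreover have "c ^ j dvd c ^ (N - k)"
      using that assms by (intro le_imp_power_dvd) simp
    ultimately show ?thesis by simp
  qed
  then show ?thesis by (auto simp: coeff_mult intro!: dvd_sum)
qed

lemma power_dvd_low_coeff_shift:
  fixes u v :: "'a::comm_ring_1"
  assumes "i < n"
  shows "(v - u) ^ j dvd coeff (([:-u, 1:] ^ (n + j) * a - [:-v, 1:] ^ n * b) \<circ>\<^sub>p [:v, 1:]) i"
proof -
  have "[:-v, 1:] ^ n \<circ>\<^sub>p [:v, 1:] = monom 1 n"
    by (simp add: monom_altdef pcompose_power pcompose_pCons)
  moreover have "[:-u, 1:] \<circ>\<^sub>p [:v, 1:] = [:v - u, 1:]"
    by (simp add: pcompose_pCons)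
  ultimately have "coeff (([:-u, 1:] ^ (n + j) * a - [:-v, 1:] ^ n * b) \<circ>\<^sub>p [:v, 1:]) i
      = coeff ([:v - u, 1:] ^ (n + j) * (a \<circ>\<^sub>p [:v, 1:])) i"
    using assms by (simp add: pcompose_diff pcompose_mult pcompose_power coeff_monom_mult)
  also have "(v - u) ^ j dvd \<dots>"
    using assms by (intro power_dvd_coeff_linear_power_mult) simp
  finally show ?thesis .
qed

lemma prod_linear_factors_dvd:
  fixes p :: "'a::idom poly"
  assumes "p \<noteq> 0" and "\<And>z. count G z \<le> order z p"
  shows "(\<Prod>z\<in>#G. [:-z, 1:]) dvd p"
  using assms
proof (induction G arbitrary: p)
  case empty
  then show ?case by simp
next
  case (add a G)
  have "1 \<le> order a p" using add.prems(2)[of a] by simp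
  then have "[:-a, 1:] ^ 1 dvd p" using order_divides by blast
  then obtain p' where p: "p = [:-a, 1:] * p'" by auto
  have "p' \<noteq> 0" using p add.prems(1) by auto
  moreover have "count G z \<le> order z p'" for z
  proof -
    have "[:-a, 1:] * p' \<noteq> 0" using p add.prems(1) by simp
    then have "order z p = order z [:-a, 1:] + order z p'"
      unfolding p by (rule order_mult)
    moreover have "order z [:-a, 1:] = (if z = a then 1 else 0)"
      using order_power_n_n[of a 1] by (auto intro: order_0I)
    ultimately show ?thesis using add.prems(2)[of z] by (auto split: if_splits)
  qed
  ultimately have "(\<Prod>z\<in>#G. [:-z, 1:]) dvd p'" by (rule add.IH)
  then have "[:-a, 1:] * (\<Prod>z\<in>#G. [:-z, 1:]) dvd p"
    unfolding p by (rule mult_dvd_mono[OF dvd_refl])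
  then show ?case by simp
qed

lemma mult_closure_mult:
  assumes "f \<in> mult_closure M" and "g \<in> mult_closure M"
  shows "f * g \<in> mult_closure M"
proof -
  obtain F G where "f = prod_mset F" "set_mset F \<subseteq> M" "g = prod_mset G" "set_mset G \<subseteq> M"
    using assms unfolding mult_closure_def by blast
  then have "f * g = prod_mset (F + G)" "set_mset (F + G) \<subseteq> M" by auto
  then show ?thesis unfolding mult_closure_def by blast
qed

lemma linear_power_in_mult_closure:
  assumes "z \<in> Z"
  shows "[:-z, 1:] ^ n \<in> mult_closure (M_of Z)"
proof -
  have "[:-z, 1:] ^ n = prod_mset (replicate_mset n [:-z, 1:])" by simp
  moreover have "set_mset (replicate_mset n [:-z, 1:]) \<subseteq> M_of Z"
    using assms by (auto simp: M_of_def)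
  ultimately show ?thesis unfolding mult_closure_def by blast
qed

lemma mult_closure_M_ofE:
  assumes "f \<in> mult_closure (M_of Z)"
  obtains G where "set_mset G \<subseteq> Z" and "f = (\<Prod>z\<in>#G. [:-z, 1:])"
proof -
  obtain F where F: "f = prod_mset F" "set_mset F \<subseteq> M_of Z"
    using assms unfolding mult_closure_def by blast
  define G where "G = image_mset (\<lambda>p. - coeff p 0) F"
  have "set_mset G \<subseteq> Z" using F(2) by (auto simp: G_def M_of_def)
  moreover have "image_mset (\<lambda>z. [:-z, 1:]) G = F"
  proof -
    have "image_mset (\<lambda>z. [:-z, 1:]) G = image_mset (\<lambda>p. [:coeff p 0, 1:]) F"
      by (simp add: G_def multiset.map_comp o_def)
    also have "\<dots> = image_mset id F"
      using F(2) by (intro image_mset_cong) (auto simp: M_of_def)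
    finally show ?thesis by simp
  qed
  ultimately show thesis using F(1) that by blast
qed

lemma linear_power_count_dvd_prod: "[:-z, 1:] ^ count G z dvd (\<Prod>a\<in>#G. [:-a, 1:])"
proof -
  have "[:-z, 1:] ^ count G z = (\<Prod>a\<in>#{#b \<in># G. b = z#}. [:-a, 1:])"
    by (simp add: filter_eq_replicate_mset)
  also have "\<dots> dvd (\<Prod>a\<in>#G. [:-a, 1:])"
    by (intro prod_mset_subset_imp_dvd image_mset_subseteq_mono multiset_filter_subset)
  finally show ?thesis .
qed

lemma compatible_family_diff:
  assumes "compatible_family M x" and "compatible_family M y"
  shows "compatible_family M (\<lambda>f. x f - y f)"
  unfolding compatible_family_def
proof (intro ballI impI)
  fix f g assume "f \<in> mult_closure M" "g \<in> mult_closure M" "f dvd g"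
  then have "f dvd (x g - x f) - (y g - y f)"
    using assms unfolding compatible_family_def by (blast intro: dvd_diff)
  then show "f dvd (x g - y g) - (x f - y f)" by (simp add: algebra_simps)
qed

lemma compatible_family_dvd_iff:
  assumes "compatible_family M x"
    and "f \<in> mult_closure M" and "g \<in> mult_closure M" and "f dvd g"
  shows "f dvd x g \<longleftrightarrow> f dvd x f"
proof -
  have "f dvd x g - x f" using assms unfolding compatible_family_def by blast
  then show ?thesis by (metis diff_add_cancel dvd_add_right_iff)
qed

lemma adic_related_commute: "adic_related u v \<longleftrightarrow> adic_related v u"
proof -
  have "(v - u) ^ j dvd r \<longleftrightarrow> (u - v) ^ j dvd r" for r :: 'a and j
  proof -
    have "(v - u) ^ j = (- 1) ^ j * (u - v) ^ j"
      by (simp flip: power_mult_distrib)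
    then show ?thesis by (cases "even j") simp_all
  qed
  then show ?thesis unfolding adic_related_def by simp
qed

text \<open>The image of \<open>d\<close> in the \<open>(q - z)\<close>-adic completion \<open>R[q]\<^bsup>{z}\<^esup>\<close> of \<open>R[q]\<close> is zero.\<close>
definition vanishes_at :: "('a::comm_ring_1 poly \<Rightarrow> 'a poly) \<Rightarrow> 'a \<Rightarrow> bool" where
  "vanishes_at d z \<longleftrightarrow> (\<forall>n. [:-z, 1:] ^ n dvd d ([:-z, 1:] ^ n))"

text \<open>Compatibility modulo \<open>(q - u)\<^sup>n\<^sup>+\<^sup>j (q - v)\<^sup>n\<close> writes \<open>d ((q - v)\<^sup>n)\<close> as \<open>(q - u)\<^sup>n\<^sup>+\<^sup>j a - (q - v)\<^sup>n b\<close>,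
  so after the shift \<open>q \<mapsto> q + v\<close> its coefficients below \<open>n\<close> are divisible by every power of
  \<open>u - v\<close>, hence vanish by separatedness.\<close>
lemma vanishes_at_if_adic_related:
  assumes d: "compatible_family (M_of Z) d"
    and "u \<in> Z" and "v \<in> Z" and "adic_related u v" and "vanishes_at d u"
  shows "vanishes_at d v"
  unfolding vanishes_at_def
proof
  fix n
  define P where "P = d ([:-v, 1:] ^ n)"
  have "(v - u) ^ j dvd coeff (P \<circ>\<^sub>p [:v, 1:]) i" if "i < n" for i j
  proof -
    define f where "f = [:-u, 1:] ^ (n + j) * [:-v, 1:] ^ n"
    have f: "f \<in> mult_closure (M_of Z)"
      unfolding f_def using assms by (intro mult_closure_mult linear_power_in_mult_closure)
    have "[:-u, 1:] ^ (n + j) dvd d f"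
      using compatible_family_dvd_iff[OF d _ f] \<open>vanishes_at d u\<close> \<open>u \<in> Z\<close>
      by (simp add: f_def vanishes_at_def linear_power_in_mult_closure)
    then obtain a where a: "d f = [:-u, 1:] ^ (n + j) * a" ..
    have "[:-v, 1:] ^ n dvd d f - P"
      using d f \<open>v \<in> Z\<close> unfolding compatible_family_def P_def f_def
      by (simp add: linear_power_in_mult_closure)
    then obtain b where b: "d f - P = [:-v, 1:] ^ n * b" ..
    have P_eq: "P = [:-u, 1:] ^ (n + j) * a - [:-v, 1:] ^ n * b"
      by (simp flip: a b)
    show ?thesis
      unfolding P_eq using \<open>i < n\<close> by (rule power_dvd_low_coeff_shift)
  qed
  moreover have "adic_related v u"
    using \<open>adic_related u v\<close> adic_related_commute by blast
  ultimately have "coeff (P \<circ>\<^sub>p [:v, 1:]) i = 0" if "i < n" for i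
    using that unfolding adic_related_def by blast
  then show "[:-v, 1:] ^ n dvd P" by (simp add: linear_power_dvd_iff_coeff_shift)
qed

lemma dvd_family_if_vanishes_at_all:
  fixes d :: "'a::idom poly \<Rightarrow> 'a poly"
  assumes d: "compatible_family (M_of Z) d"
    and vanishes: "\<forall>z\<in>Z. vanishes_at d z"
    and f: "f \<in> mult_closure (M_of Z)"
  shows "f dvd d f"
proof (cases "d f = 0")
  case False
  obtain G where G: "set_mset G \<subseteq> Z" and f_eq: "f = (\<Prod>z\<in>#G. [:-z, 1:])"
    using f by (rule mult_closure_M_ofE)
  have "count G z \<le> order z (d f)" for z
  proof (cases "z \<in># G")
    case True
    then have "z \<in> Z" using G by blast
    then have "[:-z, 1:] ^ count G z dvd d f"
      using compatible_family_dvd_iff[OF d linear_power_in_mult_closure f] vanishes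
        linear_power_count_dvd_prod[of z G]
      by (simp add: f_eq vanishes_at_def)
    then show ?thesis using False order_divides by blast
  qed (simp add: not_in_iff)
  then show ?thesis using False by (simp add: f_eq prod_linear_factors_dvd)
qed simp

theorem theorem5p2:
  fixes Z Z' :: "'a::{idom, ring_char_0} set"
  assumes "\<forall>z\<in>Z. root_of_unity z"
    and "adic_connected Z"
    and "Z' \<subseteq> Z" and "Z' \<noteq> {}"
  shows "rho_injective Z Z'"
  unfolding rho_injective_def
proof (intro allI impI)
  fix x y :: "'a poly \<Rightarrow> 'a poly"
  assume "compatible_family (M_of Z) x" "compatible_family (M_of Z) y"
    and eq': "limit_eq (M_of Z') x y"
  define d where "d = (\<lambda>f. x f - y f)"
  have d: "compatible_family (M_of Z) d"
    unfolding d_def by (rule compatible_family_diff) fact+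
  obtain a where "a \<in> Z'" using \<open>Z' \<noteq> {}\<close> by blast
  then have "vanishes_at d a"
    using eq' by (auto simp: vanishes_at_def limit_eq_def d_def linear_power_in_mult_closure)
  have "vanishes_at d z" if "z \<in> Z" for z
  proof -
    have "(\<lambda>u v. u \<in> Z \<and> v \<in> Z \<and> adic_related u v)\<^sup>*\<^sup>* a z"
      using \<open>adic_connected Z\<close> \<open>a \<in> Z'\<close> \<open>Z' \<subseteq> Z\<close> that unfolding adic_connected_def by blast
    then show ?thesis
      by induction (use \<open>vanishes_at d a\<close> d vanishes_at_if_adic_related in blast)+
  qed
  then show "limit_eq (M_of Z) x y"
    using d dvd_family_if_vanishes_at_all unfolding limit_eq_def d_def by blast
qed

end
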